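(* Under the assumptions of the initial condition $p_0(X,n)=\rho_0(n)\sum_\nu\prod_{i=1}^n p_0^i(x_{\nu_i})$ (exactly $n$ targets, $\rho_0(n)=1$, pairwise distinct $p_0^i$), let the predicted pdf be $p_1^-(X,n)=\rho_0(n)\sum_\nu\prod_i p_1^{i-}(x_{\nu_i})$ with $p_1^{i-}(x)=\int p(x\mid x')p_0^i(x')dx'$, and let a measurement set $Z_1=\{z^1_1,\dots,z^1_m\}$ be received. Then the Bayes-updated MT pdf $p_1(X,n\mid Z_1)=\dfrac{p(Z_1\mid X,n)\,p_1^-(X,n)}{\sum_{q}\frac{1}{q!}\int p(Z_1\mid X',q)\,p_1^-(X',q)\,dX'}$ equals $$p_1(X,n\mid Z_1)=\sum_{\sigma^{(n)}}\omega_1^{\sigma^{(n)}}\sum_\nu\prod_{i=1}^n p_1^i\big(x_{\nu_i}\mid z^1_{\sigma^{(n)}_i}\big),$$ where the sum is over all data association hypotheses $\sigma^{(n)}$ for $n$ targets, $$p_1^i(x\mid z)=\begin{cases}\dfrac{p(z\mid x)p_1^{i-}(x)}{\int p(z\mid x')p_1^{i-}(x')dx'}, & z\neq\phi,\\ p_1^{i-}(x), & z=\phi,\end{cases}$$ $$\omega_1^{\sigma^{(n)}}=\frac{l_{\sigma^{(n)}}\,p(\sigma^{(n)}\mid n)\,\rho_0(n)}{\sum_{q}\sum_{\nu^{(q)}}l_{\nu^{(q)}}\,p(\nu^{(q)}\mid q)\,\rho_0(q)},\qquad l_{\sigma^{(n)}}=\frac{k!}{V^k}\prod_{i=1}^n\int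 p(z^1_{\sigma^{(n)}_i}\mid x)\,p_1^{i-}(x)\,dx,$$ with $k$ the number of measurements that $\sigma^{(n)}$ assigns to clutter (and the denominator sums over all cardinalities $q$ and all $q$-target data associations $\nu^{(q)}$).
   Context: A multi-target (MT) pdf is a function $p(X,n)$ of a cardinality $n$ and an unordered collection $X=\{x_1,\dots,x_n\}$ of points in $\mathbb{R}^d$; $\sum_\nu$ is the sum over all permutations $\nu$ of $\{1,\dots,n\}$; the integral over $n$-element collections is $\frac{1}{n!}\int\cdot\,dx_1\cdots dx_n$. Single-target transition density $p(x\mid x')$, single-target likelihood $p(z\mid x)$. Given measurements $Z=\{z_1,\dots,z_m\}$, a data association hypothesis for $n$ targets is $\sigma^{(n)}=(\sigma^{(n)}_1,\dots,\sigma^{(n)}_n)$ with $\sigma^{(n)}_i\in\{z_1,\dots,z_m,\phi\}$, each measurement assigned to at most one target ($\phi$ = missed detection); the $k$ measurements not assigned to any target are clutter, so $m-k$ targets are detected. Convention: $p(\phi\mid x)=1$. The MT likelihood is $p(Z\mid X,n)=\sum_{\sigma^{(n)}}p(Z\mid\sigma^{(n)},X,n)\,p(\sigma^{(n)}\mid n)$ with a priori probability $p(\sigma^{(n)}\mid n)=p_D^{m-k}(1-p_D)^{n-(m-k)}e^{-\lambda V}\frac{(\lambda V)^k}{k!}$ (detection probability $p_D$, Poisson clutter of rate $\lambda$ uniform on sensor volume $V$) and $p(Z\mid\sigma^{(n)},X,n)=\frac{k!}{V^k}\prod_{i=1}^n p(z_{\sigma^{(n)}_i}\mid x_i)$. 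*)

theory Defs
  imports "HOL-Analysis.Analysis" "HOL-Combinatorics.Permutations"
begin

text \<open>Targets live in a Euclidean space 'a (standing for R^d), measurements in
a Euclidean space 'b.  An n-element collection X = {x_1,...,x_n} is represented by a function
X :: nat \<Rightarrow> 'a, whose values at 0,...,n-1 are the points (indices shifted by one).
The measurement set Z = {z_1,...,z_m} is a function z :: nat \<Rightarrow> 'b on {..<m}.
A data association hypothesis for n targets is sigma :: nat \<Rightarrow> nat option:
sigma i = Some j means target i is assigned measurement z j, sigma i = None means phi
(missed detection); sigma is None outside {..<n}.\<close>

definition assoc :: "nat \<Rightarrow> nat \<Rightarrow> (nat \<Rightarrow> nat option) set" where
  "assoc n m = {\<sigma>. (\<forall>i. n \<le> i \<longrightarrow> \<sigma> i = None)
                  \<and> (\<forall>i<n. \<forall>j. \<sigma> i = Some j \<longrightarrow> j < m)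
                  \<and> (\<forall>i<n. \<forall>i'<n. \<sigma> i = \<sigma> i' \<and> \<sigma> i \<noteq> None \<longrightarrow> i = i')}"

definition ndet :: "nat \<Rightarrow> (nat \<Rightarrow> nat option) \<Rightarrow> nat" where
  "ndet n \<sigma> = card {i\<in>{..<n}. \<sigma> i \<noteq> None}"

definition nclutter :: "nat \<Rightarrow> nat \<Rightarrow> (nat \<Rightarrow> nat option) \<Rightarrow> nat" where
  "nclutter m n \<sigma> = m - ndet n \<sigma>"

definition prior_assoc :: "real \<Rightarrow> real \<Rightarrow> real \<Rightarrow> nat \<Rightarrow> nat \<Rightarrow> (nat \<Rightarrow> nat option) \<Rightarrow> real" where
  "prior_assoc pD lam V m n \<sigma> =
     pD ^ ndet n \<sigma> * (1 - pD) ^ (n - ndet n \<sigma>) * exp (- lam * V)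
       * (lam * V) ^ nclutter m n \<sigma> / fact (nclutter m n \<sigma>)"

definition meas_lik :: "('b \<Rightarrow> 'a \<Rightarrow> real) \<Rightarrow> (nat \<Rightarrow> 'b) \<Rightarrow> nat option \<Rightarrow> 'a \<Rightarrow> real" where
  "meas_lik g z oz x = (case oz of None \<Rightarrow> 1 | Some j \<Rightarrow> g (z j) x)"

definition assoc_lik :: "('b \<Rightarrow> 'a \<Rightarrow> real) \<Rightarrow> (nat \<Rightarrow> 'b) \<Rightarrow> real \<Rightarrow> nat \<Rightarrow> nat
     \<Rightarrow> (nat \<Rightarrow> nat option) \<Rightarrow> (nat \<Rightarrow> 'a) \<Rightarrow> real" where
  "assoc_lik g z V m n \<sigma> X =
     fact (nclutter m n \<sigma>) / V ^ nclutter m n \<sigma> * (\<Prod>i<n. meas_lik g z (\<sigma> i) (X i))"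

definition MT_lik :: "('b \<Rightarrow> 'a \<Rightarrow> real) \<Rightarrow> (nat \<Rightarrow> 'b) \<Rightarrow> real \<Rightarrow> real \<Rightarrow> real \<Rightarrow> nat
     \<Rightarrow> (nat \<Rightarrow> 'a) \<Rightarrow> nat \<Rightarrow> real" where
  "MT_lik g z pD lam V m X n =
     (\<Sum>\<sigma>\<in>assoc n m. assoc_lik g z V m n \<sigma> X * prior_assoc pD lam V m n \<sigma>)"

definition rho0 :: "nat \<Rightarrow> nat \<Rightarrow> real" where
  "rho0 N n = (if n = N then 1 else 0)"

definition MT_pdf :: "(nat \<Rightarrow> real) \<Rightarrow> (nat \<Rightarrow> 'a \<Rightarrow> real) \<Rightarrow> (nat \<Rightarrow> 'a) \<Rightarrow> nat \<Rightarrow> real" where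
  "MT_pdf \<rho> p X n = \<rho> n * (\<Sum>\<nu>\<in>{\<nu>. \<nu> permutes {..<n}}. \<Prod>i<n. p i (X (\<nu> i)))"

definition pred_single :: "('a::euclidean_space \<Rightarrow> 'a \<Rightarrow> real) \<Rightarrow> (nat \<Rightarrow> 'a \<Rightarrow> real) \<Rightarrow> nat \<Rightarrow> 'a \<Rightarrow> real" where
  "pred_single f p0 i x = (\<integral>x'. f x x' * p0 i x' \<partial>lborel)"

definition post_single :: "('b \<Rightarrow> 'a::euclidean_space \<Rightarrow> real) \<Rightarrow> (nat \<Rightarrow> 'b) \<Rightarrow> (nat \<Rightarrow> 'a \<Rightarrow> real)
     \<Rightarrow> nat \<Rightarrow> 'a \<Rightarrow> nat option \<Rightarrow> real" where
  "post_single g z pm i x oz = (case oz of None \<Rightarrow> pm i x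
     | Some j \<Rightarrow> g (z j) x * pm i x / (\<integral>x'. g (z j) x' * pm i x' \<partial>lborel))"

definition l_weight :: "('b \<Rightarrow> 'a::euclidean_space \<Rightarrow> real) \<Rightarrow> (nat \<Rightarrow> 'b) \<Rightarrow> (nat \<Rightarrow> 'a \<Rightarrow> real)
     \<Rightarrow> real \<Rightarrow> nat \<Rightarrow> nat \<Rightarrow> (nat \<Rightarrow> nat option) \<Rightarrow> real" where
  "l_weight g z pm V m n \<sigma> =
     fact (nclutter m n \<sigma>) / V ^ nclutter m n \<sigma>
       * (\<Prod>i<n. \<integral>x. meas_lik g z (\<sigma> i) x * pm i x \<partial>lborel)"

definition omega :: "('b \<Rightarrow> 'a::euclidean_space \<Rightarrow> real) \<Rightarrow> (nat \<Rightarrow> 'b) \<Rightarrow> (nat \<Rightarrow> 'a \<Rightarrow> real)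
     \<Rightarrow> (nat \<Rightarrow> real) \<Rightarrow> real \<Rightarrow> real \<Rightarrow> real \<Rightarrow> nat \<Rightarrow> nat \<Rightarrow> (nat \<Rightarrow> nat option) \<Rightarrow> real" where
  "omega g z pm \<rho> pD lam V m n \<sigma> =
     l_weight g z pm V m n \<sigma> * prior_assoc pD lam V m n \<sigma> * \<rho> n /
     (\<Sum>q. \<Sum>\<nu>\<in>assoc q m. l_weight g z pm V m q \<nu> * prior_assoc pD lam V m q \<nu> * \<rho> q)"

text \<open>Bayes update of an MT pdf p^- : integral over n-element collections is
  1/n! times the integral over (R^d)^n (product of Lebesgue measures)\<close>
definition bayes_update :: "((nat \<Rightarrow> 'a::euclidean_space) \<Rightarrow> nat \<Rightarrow> real) \<Rightarrow> ((nat \<Rightarrow> 'a) \<Rightarrow> nat \<Rightarrow> real)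
     \<Rightarrow> (nat \<Rightarrow> 'a) \<Rightarrow> nat \<Rightarrow> real" where
  "bayes_update L pminus X n =
     L X n * pminus X n /
     (\<Sum>q. 1 / fact q * (\<integral>X'. L X' q * pminus X' q \<partial>(PiM {..<q} (\<lambda>_. lborel))))"

end

theory Submission
  imports Defs
begin

text \<open>Both the MT likelihood and the predicted pdf are symmetric sums: the former over data
association hypotheses \<sigma>, the latter over relabellings \<nu> of the targets.  Relabelling a
hypothesis (\<sigma> \<mapsto> \<sigma> \<circ> \<nu>) permutes the hypotheses and leaves their prior unchanged, so
the product collapses to a single sum over \<sigma> of symmetrised products of the factors
p(z_\<sigma>(i) | x) p_i(x).  Each factor is the single-target posterior times its normaliser,
and the normalisers multiply to l_\<sigma>.  A symmetrised product of n probability densities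
integrates to n!, which cancels the 1/n! of the set integral, so the normalising constant of
Bayes' rule is the sum of the unnormalised hypothesis weights.\<close>

lemma pred_single_pdf:
  fixes f :: "'a::euclidean_space \<Rightarrow> 'a \<Rightarrow> real" and p :: "nat \<Rightarrow> 'a \<Rightarrow> real"
  assumes f_meas: "(\<lambda>(x, x'). f x x') \<in> borel_measurable (lborel \<Otimes>\<^sub>M lborel)"
    and f_nonneg: "\<And>x x'. 0 \<le> f x x'"
    and f_int: "\<And>x'. integrable lborel (\<lambda>x. f x x')"
    and f_norm: "\<And>x'. (\<integral>x. f x x' \<partial>lborel) = 1"
    and p_meas: "p i \<in> borel_measurable lborel"
    and p_nonneg: "\<And>x. 0 \<le> p i x"
    and p_int: "integrable lborel (p i)"
    and p_norm: "(\<integral>x. p i x \<partial>lborel) = 1"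
  shows "integrable lborel (pred_single f p i)"
    and "(\<integral>x. pred_single f p i x \<partial>lborel) = 1"
proof -
  let ?h = "\<lambda>(x, x'). f x x' * p i x'"
  have h_meas: "?h \<in> borel_measurable (lborel \<Otimes>\<^sub>M lborel)"
  proof -
    have "(\<lambda>q. p i (snd q)) \<in> borel_measurable (lborel \<Otimes>\<^sub>M (lborel::'a measure))"
      using p_meas by measurable
    with f_meas have "(\<lambda>q. (\<lambda>(x, x'). f x x') q * p i (snd q)) \<in> borel_measurable (lborel \<Otimes>\<^sub>M lborel)"
      by (intro borel_measurable_times)
    then show ?thesis by (simp add: case_prod_beta)
  qed
  have inner: "(\<integral>\<^sup>+x. ennreal (f x x' * p i x') \<partial>lborel) = ennreal (p i x')" for x'
  proof -
    have "(\<integral>\<^sup>+x. ennreal (f x x' * p i x') \<partial>lborel) = ennreal (\<integral>x. f x x' * p i x' \<partial>lborel)"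
      by (rule nn_integral_eq_integral) (auto intro: f_int integrable_mult_left simp: f_nonneg p_nonneg)
    then show ?thesis using f_norm[of x'] by simp
  qed
  have "(\<integral>\<^sup>+q. ennreal (?h q) \<partial>(lborel \<Otimes>\<^sub>M lborel))
        = (\<integral>\<^sup>+x'. \<integral>\<^sup>+x. ennreal (f x x' * p i x') \<partial>lborel \<partial>lborel)"
    using h_meas by (subst lborel_pair.nn_integral_snd[symmetric]) (auto simp: case_prod_beta)
  also have "\<dots> = (\<integral>\<^sup>+x'. ennreal (p i x') \<partial>lborel)" by (simp add: inner)
  also have "\<dots> = 1"
    using p_norm by (subst nn_integral_eq_integral) (auto simp: p_int p_nonneg)
  finally have h_int: "integrable (lborel \<Otimes>\<^sub>M lborel) ?h"
    using h_meas by (intro integrableI_nonneg) (auto simp: f_nonneg p_nonneg)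
  show "integrable lborel (pred_single f p i)"
    using lborel_pair.integrable_fst[OF h_int] by (simp add: pred_single_def[abs_def])
  have "(\<integral>x. pred_single f p i x \<partial>lborel) = (\<integral>x'. (\<integral>x. f x x' * p i x' \<partial>lborel) \<partial>lborel)"
    using lborel_pair.Fubini_integral[OF h_int] by (simp add: pred_single_def)
  also have "\<dots> = (\<integral>x'. p i x' \<partial>lborel)" using f_norm by simp
  finally show "(\<integral>x. pred_single f p i x \<partial>lborel) = 1" using p_norm by simp
qed

lemma assoc_Some_less: "\<sigma> \<in> assoc n m \<Longrightarrow> i < n \<Longrightarrow> \<sigma> i = Some j \<Longrightarrow> j < m"
  unfolding assoc_def by blast

lemma assoc_comp_permutes:
  assumes \<nu>: "\<nu> permutes {..<n}" and \<sigma>: "\<sigma> \<in> assoc n m"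
  shows "\<sigma> \<circ> \<nu> \<in> assoc n m"
proof -
  have fixed: "\<nu> i = i" if "n \<le> i" for i using permutes_not_in[OF \<nu>] that by auto
  have into: "\<nu> i < n" if "i < n" for i using permutes_in_image[OF \<nu>, of i] that by auto
  have \<sigma>_assoc: "\<forall>i. n \<le> i \<longrightarrow> \<sigma> i = None" "\<forall>i<n. \<forall>j. \<sigma> i = Some j \<longrightarrow> j < m"
      "\<forall>i<n. \<forall>i'<n. \<sigma> i = \<sigma> i' \<and> \<sigma> i \<noteq> None \<longrightarrow> i = i'"
    using \<sigma> unfolding assoc_def by blast+
  have "\<forall>i. n \<le> i \<longrightarrow> \<sigma> (\<nu> i) = None" using \<sigma>_assoc(1) fixed by simp
  moreover have "\<forall>i<n. \<forall>j. \<sigma> (\<nu> i) = Some j \<longrightarrow> j < m" using \<sigma>_assoc(2) into by blast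
  moreover have "i = i'" if "i < n" "i' < n" "\<sigma> (\<nu> i) = \<sigma> (\<nu> i') \<and> \<sigma> (\<nu> i) \<noteq> None" for i i'
  proof -
    have "\<nu> i = \<nu> i'" using \<sigma>_assoc(3) that into[of i] into[of i'] by blast
    then show ?thesis using permutes_inj[OF \<nu>] by (simp add: inj_eq)
  qed
  ultimately show ?thesis unfolding assoc_def o_def by blast
qed

lemma ndet_comp_permutes:
  assumes \<nu>: "\<nu> permutes {..<n}"
  shows "ndet n (\<sigma> \<circ> \<nu>) = ndet n \<sigma>"
proof -
  have "{i\<in>{..<n}. \<sigma> i \<noteq> None} = \<nu> ` {i\<in>{..<n}. (\<sigma> \<circ> \<nu>) i \<noteq> None}"
  proof -
    have "\<nu> ` {i\<in>{..<n}. \<sigma> (\<nu> i) \<noteq> None} = {j \<in> \<nu> ` {..<n}. \<sigma> j \<noteq> None}" by auto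
    then show ?thesis using permutes_image[OF \<nu>] by simp
  qed
  then show ?thesis
    unfolding ndet_def using permutes_inj[OF \<nu>] by (simp add: card_image inj_on_subset)
qed

lemma bij_betw_comp_permutes_assoc:
  assumes \<nu>: "\<nu> permutes {..<n}"
  shows "bij_betw (\<lambda>\<sigma>. \<sigma> \<circ> \<nu>) (assoc n m) (assoc n m)"
proof (rule bij_betw_byWitness[where f' = "\<lambda>\<sigma>. \<sigma> \<circ> inv \<nu>"])
  show "\<forall>\<sigma>\<in>assoc n m. \<sigma> \<circ> \<nu> \<circ> inv \<nu> = \<sigma>" "\<forall>\<sigma>\<in>assoc n m. \<sigma> \<circ> inv \<nu> \<circ> \<nu> = \<sigma>"
    using permutes_inverses[OF \<nu>] by (auto simp: fun_eq_iff)
  show "(\<lambda>\<sigma>. \<sigma> \<circ> \<nu>) ` assoc n m \<subseteq> assoc n m" "(\<lambda>\<sigma>. \<sigma> \<circ> inv \<nu>) ` assoc n m \<subseteq> assoc n m"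
    using assoc_comp_permutes[OF \<nu>] assoc_comp_permutes[OF permutes_inv[OF \<nu>]] by auto
qed

lemma sum_assoc_mult_sum_permutes:
  fixes c :: "(nat \<Rightarrow> nat option) \<Rightarrow> real" and h :: "nat option \<Rightarrow> 'a \<Rightarrow> real"
    and q :: "nat \<Rightarrow> 'a \<Rightarrow> real"
  assumes c_invariant: "\<And>\<sigma> \<nu>. \<nu> permutes {..<n} \<Longrightarrow> \<sigma> \<in> assoc n m \<Longrightarrow> c (\<sigma> \<circ> \<nu>) = c \<sigma>"
  shows "(\<Sum>\<sigma>\<in>assoc n m. c \<sigma> * (\<Prod>i<n. h (\<sigma> i) (X i)))
           * (\<Sum>\<nu>\<in>{\<nu>. \<nu> permutes {..<n}}. \<Prod>i<n. q i (X (\<nu> i)))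
       = (\<Sum>\<sigma>\<in>assoc n m. c \<sigma> * (\<Sum>\<nu>\<in>{\<nu>. \<nu> permutes {..<n}}.
            \<Prod>i<n. h (\<sigma> i) (X (\<nu> i)) * q i (X (\<nu> i))))"
proof -
  have relabel: "(\<Sum>\<sigma>\<in>assoc n m. c \<sigma> * (\<Prod>i<n. h (\<sigma> i) (X i)))
      = (\<Sum>\<sigma>\<in>assoc n m. c \<sigma> * (\<Prod>i<n. h (\<sigma> i) (X (\<nu> i))))"
    if \<nu>: "\<nu> permutes {..<n}" for \<nu>
  proof -
    have inv\<nu>: "inv \<nu> permutes {..<n}" using permutes_inv[OF \<nu>] .
    have "(\<Sum>\<sigma>\<in>assoc n m. c \<sigma> * (\<Prod>i<n. h (\<sigma> i) (X i)))
        = (\<Sum>\<sigma>\<in>assoc n m. c (\<sigma> \<circ> inv \<nu>) * (\<Prod>i<n. h ((\<sigma> \<circ> inv \<nu>) i) (X i)))"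
      using sum.reindex_bij_betw[OF bij_betw_comp_permutes_assoc[OF inv\<nu>],
          of "\<lambda>\<sigma>. c \<sigma> * (\<Prod>i<n. h (\<sigma> i) (X i))"]
      by simp
    also have "\<dots> = (\<Sum>\<sigma>\<in>assoc n m. c \<sigma> * (\<Prod>i<n. h (\<sigma> i) (X (\<nu> i))))"
    proof (rule sum.cong[OF refl])
      fix \<sigma> assume \<sigma>: "\<sigma> \<in> assoc n m"
      have "(\<Prod>i<n. h ((\<sigma> \<circ> inv \<nu>) i) (X i)) = (\<Prod>i<n. h ((\<sigma> \<circ> inv \<nu>) (\<nu> i)) (X (\<nu> i)))"
        using prod.permute[OF \<nu>, of "\<lambda>i. h ((\<sigma> \<circ> inv \<nu>) i) (X i)"] by (simp add: o_def)
      also have "\<dots> = (\<Prod>i<n. h (\<sigma> i) (X (\<nu> i)))"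
        using permutes_inverses(2)[OF \<nu>] by simp
      finally show "c (\<sigma> \<circ> inv \<nu>) * (\<Prod>i<n. h ((\<sigma> \<circ> inv \<nu>) i) (X i))
          = c \<sigma> * (\<Prod>i<n. h (\<sigma> i) (X (\<nu> i)))"
        using c_invariant[OF inv\<nu> \<sigma>] by simp
    qed
    finally show ?thesis .
  qed
  have "(\<Sum>\<sigma>\<in>assoc n m. c \<sigma> * (\<Prod>i<n. h (\<sigma> i) (X i)))
          * (\<Sum>\<nu>\<in>{\<nu>. \<nu> permutes {..<n}}. \<Prod>i<n. q i (X (\<nu> i)))
      = (\<Sum>\<nu>\<in>{\<nu>. \<nu> permutes {..<n}}. \<Sum>\<sigma>\<in>assoc n m.
           c \<sigma> * (\<Prod>i<n. h (\<sigma> i) (X (\<nu> i)) * q i (X (\<nu> i))))"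
    by (simp add: sum_distrib_left sum_distrib_right relabel prod.distrib mult.assoc)
  also have "\<dots> = (\<Sum>\<sigma>\<in>assoc n m. \<Sum>\<nu>\<in>{\<nu>. \<nu> permutes {..<n}}.
           c \<sigma> * (\<Prod>i<n. h (\<sigma> i) (X (\<nu> i)) * q i (X (\<nu> i))))"
    by (rule sum.swap)
  finally show ?thesis by (simp add: sum_distrib_left)
qed

lemma integral_sum_permutes_prod:
  fixes k :: "nat \<Rightarrow> 'a::euclidean_space \<Rightarrow> real"
  assumes k_int: "\<And>i. i < n \<Longrightarrow> integrable lborel (k i)"
    and k_norm: "\<And>i. i < n \<Longrightarrow> (\<integral>x. k i x \<partial>lborel) = 1"
  shows "integrable (PiM {..<n} (\<lambda>_. lborel))
           (\<lambda>X. \<Sum>\<nu>\<in>{\<nu>. \<nu> permutes {..<n}}. \<Prod>i<n. k i (X (\<nu> i)))"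
    and "(\<integral>X. (\<Sum>\<nu>\<in>{\<nu>. \<nu> permutes {..<n}}. \<Prod>i<n. k i (X (\<nu> i))) \<partial>PiM {..<n} (\<lambda>_. lborel))
           = fact n"
proof -
  interpret product_sigma_finite "\<lambda>_. lborel :: 'a measure" by standard
  have reindex: "(\<Prod>i<n. k i (X (\<nu> i))) = (\<Prod>j<n. k (inv \<nu> j) (X j))"
    if \<nu>: "\<nu> permutes {..<n}" for \<nu> X
    using prod.permute[OF permutes_inv[OF \<nu>], of "\<lambda>i. k i (X (\<nu> i))"] permutes_inverses(1)[OF \<nu>]
    by (simp add: o_def)
  have inv_less: "inv \<nu> j < n" if "\<nu> permutes {..<n}" "j < n" for \<nu> j
    using permutes_in_image[OF permutes_inv[OF that(1)]] that(2) by auto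
  have term_int: "integrable (PiM {..<n} (\<lambda>_. lborel)) (\<lambda>X. \<Prod>j<n. k (inv \<nu> j) (X j))"
    and term_integral: "(\<integral>X. (\<Prod>j<n. k (inv \<nu> j) (X j)) \<partial>PiM {..<n} (\<lambda>_. lborel)) = 1"
    if \<nu>: "\<nu> permutes {..<n}" for \<nu>
    using inv_less[OF \<nu>]
    by (auto intro!: product_integrable_prod k_int)
      (subst product_integral_prod; use inv_less[OF \<nu>] in \<open>auto intro: k_int simp: k_norm\<close>)
  have sum_eq: "(\<lambda>X. \<Sum>\<nu>\<in>{\<nu>. \<nu> permutes {..<n}}. \<Prod>i<n. k i (X (\<nu> i)))
      = (\<lambda>X. \<Sum>\<nu>\<in>{\<nu>. \<nu> permutes {..<n}}. \<Prod>j<n. k (inv \<nu> j) (X j))"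
    by (intro ext sum.cong) (auto simp: reindex)
  show "integrable (PiM {..<n} (\<lambda>_. lborel))
      (\<lambda>X. \<Sum>\<nu>\<in>{\<nu>. \<nu> permutes {..<n}}. \<Prod>i<n. k i (X (\<nu> i)))"
    unfolding sum_eq by (auto intro!: integrable_sum term_int)
  have "card {\<nu>. \<nu> permutes {..<n}} = fact n" by (rule card_permutations) simp_all
  then show "(\<integral>X. (\<Sum>\<nu>\<in>{\<nu>. \<nu> permutes {..<n}}. \<Prod>i<n. k i (X (\<nu> i))) \<partial>PiM {..<n} (\<lambda>_. lborel))
      = fact n"
    unfolding sum_eq by (simp add: Bochner_Integration.integral_sum term_int term_integral)
qed

lemma meas_lik_mult_eq_post_single:
  assumes "oz = None \<Longrightarrow> (\<integral>x. pm i x \<partial>lborel) = 1"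
    and "\<And>j. oz = Some j \<Longrightarrow> (\<integral>x. g (z j) x * pm i x \<partial>lborel) \<noteq> 0"
  shows "meas_lik g z oz x * pm i x
       = post_single g z pm i x oz * (\<integral>x. meas_lik g z oz x * pm i x \<partial>lborel)"
  using assms by (cases oz) (simp_all add: post_single_def meas_lik_def)

lemma post_single_pdf:
  assumes "integrable lborel (pm i)" and "(\<integral>x. pm i x \<partial>lborel) = 1"
    and "\<And>j. oz = Some j \<Longrightarrow> integrable lborel (\<lambda>x. g (z j) x * pm i x)"
    and "\<And>j. oz = Some j \<Longrightarrow> (\<integral>x. g (z j) x * pm i x \<partial>lborel) \<noteq> 0"
  shows "integrable lborel (\<lambda>x. post_single g z pm i x oz)"
    and "(\<integral>x. post_single g z pm i x oz \<partial>lborel) = 1"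
  using assms by (cases oz; simp add: post_single_def)+

lemma MT_lik_mult_MT_pdf:
  fixes pm :: "nat \<Rightarrow> 'a::euclidean_space \<Rightarrow> real"
  assumes pm_norm: "\<And>i. i < n \<Longrightarrow> (\<integral>x. pm i x \<partial>lborel) = 1"
    and upd_pos: "\<And>i j. i < n \<Longrightarrow> j < m \<Longrightarrow> (\<integral>x. g (z j) x * pm i x \<partial>lborel) \<noteq> 0"
  shows "MT_lik g z pD lam V m X n * MT_pdf \<rho> pm X n
       = (\<Sum>\<sigma>\<in>assoc n m. l_weight g z pm V m n \<sigma> * prior_assoc pD lam V m n \<sigma> * \<rho> n
            * (\<Sum>\<nu>\<in>{\<nu>. \<nu> permutes {..<n}}. \<Prod>i<n. post_single g z pm i (X (\<nu> i)) (\<sigma> i)))"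
proof -
  define c where "c \<sigma> = fact (nclutter m n \<sigma>) / V ^ nclutter m n \<sigma> * prior_assoc pD lam V m n \<sigma>"
    for \<sigma>
  have c_invariant: "c (\<sigma> \<circ> \<nu>) = c \<sigma>" if "\<nu> permutes {..<n}" for \<sigma> \<nu>
    unfolding c_def prior_assoc_def nclutter_def ndet_comp_permutes[OF that] ..
  have factor: "(\<Prod>i<n. meas_lik g z (\<sigma> i) (Y i) * pm i (Y i))
      = (\<Prod>i<n. post_single g z pm i (Y i) (\<sigma> i))
        * (\<Prod>i<n. \<integral>x. meas_lik g z (\<sigma> i) x * pm i x \<partial>lborel)"
    if \<sigma>: "\<sigma> \<in> assoc n m" for \<sigma> and Y :: "nat \<Rightarrow> 'a"
  proof -
    have "(\<Prod>i<n. meas_lik g z (\<sigma> i) (Y i) * pm i (Y i))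
        = (\<Prod>i<n. post_single g z pm i (Y i) (\<sigma> i)
             * (\<integral>x. meas_lik g z (\<sigma> i) x * pm i x \<partial>lborel))"
      using pm_norm upd_pos assoc_Some_less[OF \<sigma>]
      by (intro prod.cong[OF refl] meas_lik_mult_eq_post_single) auto
    then show ?thesis by (simp add: prod.distrib)
  qed
  have "MT_lik g z pD lam V m X n = (\<Sum>\<sigma>\<in>assoc n m. c \<sigma> * (\<Prod>i<n. meas_lik g z (\<sigma> i) (X i)))"
    unfolding MT_lik_def assoc_lik_def c_def by (simp add: ac_simps)
  moreover have "(\<Sum>\<sigma>\<in>assoc n m. c \<sigma> * (\<Prod>i<n. meas_lik g z (\<sigma> i) (X i)))
        * (\<Sum>\<nu>\<in>{\<nu>. \<nu> permutes {..<n}}. \<Prod>i<n. pm i (X (\<nu> i)))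
      = (\<Sum>\<sigma>\<in>assoc n m. c \<sigma> * (\<Sum>\<nu>\<in>{\<nu>. \<nu> permutes {..<n}}.
            \<Prod>i<n. meas_lik g z (\<sigma> i) (X (\<nu> i)) * pm i (X (\<nu> i))))"
    by (rule sum_assoc_mult_sum_permutes) (rule c_invariant)
  ultimately have "MT_lik g z pD lam V m X n * MT_pdf \<rho> pm X n
      = \<rho> n * (\<Sum>\<sigma>\<in>assoc n m. c \<sigma> * (\<Sum>\<nu>\<in>{\<nu>. \<nu> permutes {..<n}}.
            \<Prod>i<n. meas_lik g z (\<sigma> i) (X (\<nu> i)) * pm i (X (\<nu> i))))"
    unfolding MT_pdf_def by (simp only: mult.left_commute[of _ "\<rho> n"])
  also have "\<dots> = (\<Sum>\<sigma>\<in>assoc n m. l_weight g z pm V m n \<sigma> * prior_assoc pD lam V m n \<sigma> * \<rho> n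
      * (\<Sum>\<nu>\<in>{\<nu>. \<nu> permutes {..<n}}. \<Prod>i<n. post_single g z pm i (X (\<nu> i)) (\<sigma> i)))"
  proof -
    have "c \<sigma> * (\<Sum>\<nu>\<in>{\<nu>. \<nu> permutes {..<n}}.
            \<Prod>i<n. meas_lik g z (\<sigma> i) (X (\<nu> i)) * pm i (X (\<nu> i)))
        = l_weight g z pm V m n \<sigma> * prior_assoc pD lam V m n \<sigma>
            * (\<Sum>\<nu>\<in>{\<nu>. \<nu> permutes {..<n}}. \<Prod>i<n. post_single g z pm i (X (\<nu> i)) (\<sigma> i))"
      if \<sigma>: "\<sigma> \<in> assoc n m" for \<sigma>
      unfolding factor[OF \<sigma>] sum_distrib_right[symmetric] c_def l_weight_def by (simp only: mult_ac)
    then show ?thesis by (simp add: sum_distrib_left mult_ac)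
  qed
  finally show ?thesis .
qed

lemma integral_MT_lik_mult_MT_pdf:
  fixes pm :: "nat \<Rightarrow> 'a::euclidean_space \<Rightarrow> real"
  assumes pm_int: "\<And>i. i < n \<Longrightarrow> integrable lborel (pm i)"
    and pm_norm: "\<And>i. i < n \<Longrightarrow> (\<integral>x. pm i x \<partial>lborel) = 1"
    and upd_int: "\<And>i j. i < n \<Longrightarrow> j < m \<Longrightarrow> integrable lborel (\<lambda>x. g (z j) x * pm i x)"
    and upd_pos: "\<And>i j. i < n \<Longrightarrow> j < m \<Longrightarrow> (\<integral>x. g (z j) x * pm i x \<partial>lborel) \<noteq> 0"
  shows "(\<integral>X. MT_lik g z pD lam V m X n * MT_pdf \<rho> pm X n \<partial>PiM {..<n} (\<lambda>_. lborel))
       = fact n * (\<Sum>\<sigma>\<in>assoc n m. l_weight g z pm V m n \<sigma> * prior_assoc pD lam V m n \<sigma> * \<rho> n)"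
proof -
  have posterior_int: "integrable (PiM {..<n} (\<lambda>_. lborel))
        (\<lambda>X. \<Sum>\<nu>\<in>{\<nu>. \<nu> permutes {..<n}}. \<Prod>i<n. post_single g z pm i (X (\<nu> i)) (\<sigma> i))"
    and posterior_integral: "(\<integral>X. (\<Sum>\<nu>\<in>{\<nu>. \<nu> permutes {..<n}}.
        \<Prod>i<n. post_single g z pm i (X (\<nu> i)) (\<sigma> i)) \<partial>PiM {..<n} (\<lambda>_. lborel)) = fact n"
    if \<sigma>: "\<sigma> \<in> assoc n m" for \<sigma>
  proof -
    have "integrable lborel (\<lambda>x. post_single g z pm i x (\<sigma> i))
        \<and> (\<integral>x. post_single g z pm i x (\<sigma> i) \<partial>lborel) = 1" if i: "i < n" for i
      using post_single_pdf[of pm i "\<sigma> i" g z] pm_int[OF i] pm_norm[OF i]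
        upd_int[OF i] upd_pos[OF i] assoc_Some_less[OF \<sigma> i] by blast
    then show "integrable (PiM {..<n} (\<lambda>_. lborel))
        (\<lambda>X. \<Sum>\<nu>\<in>{\<nu>. \<nu> permutes {..<n}}. \<Prod>i<n. post_single g z pm i (X (\<nu> i)) (\<sigma> i))"
      and "(\<integral>X. (\<Sum>\<nu>\<in>{\<nu>. \<nu> permutes {..<n}}.
        \<Prod>i<n. post_single g z pm i (X (\<nu> i)) (\<sigma> i)) \<partial>PiM {..<n} (\<lambda>_. lborel)) = fact n"
      using integral_sum_permutes_prod[of n "\<lambda>i x. post_single g z pm i x (\<sigma> i)"] by simp_all
  qed
  have "(\<lambda>X. MT_lik g z pD lam V m X n * MT_pdf \<rho> pm X n)
      = (\<lambda>X. \<Sum>\<sigma>\<in>assoc n m. l_weight g z pm V m n \<sigma> * prior_assoc pD lam V m n \<sigma> * \<rho> n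
          * (\<Sum>\<nu>\<in>{\<nu>. \<nu> permutes {..<n}}. \<Prod>i<n. post_single g z pm i (X (\<nu> i)) (\<sigma> i)))"
    by (rule ext, rule MT_lik_mult_MT_pdf) (simp_all add: pm_norm upd_pos)
  then have "(\<integral>X. MT_lik g z pD lam V m X n * MT_pdf \<rho> pm X n \<partial>PiM {..<n} (\<lambda>_. lborel))
      = (\<Sum>\<sigma>\<in>assoc n m. l_weight g z pm V m n \<sigma> * prior_assoc pD lam V m n \<sigma> * \<rho> n
          * (\<integral>X. (\<Sum>\<nu>\<in>{\<nu>. \<nu> permutes {..<n}}.
               \<Prod>i<n. post_single g z pm i (X (\<nu> i)) (\<sigma> i)) \<partial>PiM {..<n} (\<lambda>_. lborel)))"
    by (simp add: Bochner_Integration.integral_sum posterior_int)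
  then show ?thesis
    by (simp add: posterior_integral sum_distrib_left mult.commute)
qed

theorem bayes_update_MT_pdf:
  fixes pm :: "nat \<Rightarrow> 'a::euclidean_space \<Rightarrow> real" and \<rho> :: "nat \<Rightarrow> real"
  assumes pm_int: "\<And>q i. \<rho> q \<noteq> 0 \<Longrightarrow> i < q \<Longrightarrow> integrable lborel (pm i)"
    and pm_norm: "\<And>q i. \<rho> q \<noteq> 0 \<Longrightarrow> i < q \<Longrightarrow> (\<integral>x. pm i x \<partial>lborel) = 1"
    and upd_int: "\<And>q i j. \<rho> q \<noteq> 0 \<Longrightarrow> i < q \<Longrightarrow> j < m \<Longrightarrow>
        integrable lborel (\<lambda>x. g (z j) x * pm i x)"
    and upd_pos: "\<And>q i j. \<rho> q \<noteq> 0 \<Longrightarrow> i < q \<Longrightarrow> j < m \<Longrightarrow>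
        (\<integral>x. g (z j) x * pm i x \<partial>lborel) \<noteq> 0"
  shows "bayes_update (MT_lik g z pD lam V m) (MT_pdf \<rho> pm) X n
       = (\<Sum>\<sigma>\<in>assoc n m. omega g z pm \<rho> pD lam V m n \<sigma>
            * (\<Sum>\<nu>\<in>{\<nu>. \<nu> permutes {..<n}}. \<Prod>i<n. post_single g z pm i (X (\<nu> i)) (\<sigma> i)))"
proof -
  have numerator: "MT_lik g z pD lam V m X n * MT_pdf \<rho> pm X n
      = (\<Sum>\<sigma>\<in>assoc n m. l_weight g z pm V m n \<sigma> * prior_assoc pD lam V m n \<sigma> * \<rho> n
          * (\<Sum>\<nu>\<in>{\<nu>. \<nu> permutes {..<n}}. \<Prod>i<n. post_single g z pm i (X (\<nu> i)) (\<sigma> i)))"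
  proof (cases "\<rho> n = 0")
    case False
    show ?thesis by (rule MT_lik_mult_MT_pdf) (simp_all add: pm_norm[OF False] upd_pos[OF False])
  qed (simp add: MT_pdf_def)
  have "1 / fact q * (\<integral>X'. MT_lik g z pD lam V m X' q * MT_pdf \<rho> pm X' q \<partial>PiM {..<q} (\<lambda>_. lborel))
      = (\<Sum>\<nu>\<in>assoc q m. l_weight g z pm V m q \<nu> * prior_assoc pD lam V m q \<nu> * \<rho> q)" for q
  proof (cases "\<rho> q = 0")
    case False
    show ?thesis
      by (subst integral_MT_lik_mult_MT_pdf)
        (simp_all add: pm_int[OF False] pm_norm[OF False] upd_int[OF False] upd_pos[OF False])
  qed (simp add: MT_pdf_def)
  then show ?thesis
    unfolding bayes_update_def omega_def numerator
    by (simp add: sum_divide_distrib)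
qed

theorem proposition2:
  fixes N m :: nat
    and p0 :: "nat \<Rightarrow> 'a::euclidean_space \<Rightarrow> real"
    and f :: "'a \<Rightarrow> 'a \<Rightarrow> real"
    and g :: "'b::euclidean_space \<Rightarrow> 'a \<Rightarrow> real"
    and z :: "nat \<Rightarrow> 'b"
    and pD lam V :: real
    and X :: "nat \<Rightarrow> 'a" and n :: nat
  assumes p0_meas: "\<And>i. i < N \<Longrightarrow> p0 i \<in> borel_measurable lborel"
    and p0_nonneg: "\<And>i x. i < N \<Longrightarrow> 0 \<le> p0 i x"
    and p0_int: "\<And>i. i < N \<Longrightarrow> integrable lborel (p0 i)"
    and p0_norm: "\<And>i. i < N \<Longrightarrow> (\<integral>x. p0 i x \<partial>lborel) = 1"
    and p0_distinct: "\<And>i j. i < N \<Longrightarrow> j < N \<Longrightarrow> i \<noteq> j \<Longrightarrow> p0 i \<noteq> p0 j"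
    and f_meas: "(\<lambda>(x, x'). f x x') \<in> borel_measurable (lborel \<Otimes>\<^sub>M lborel)"
    and f_nonneg: "\<And>x x'. 0 \<le> f x x'"
    and f_int: "\<And>x'. integrable lborel (\<lambda>x. f x x')"
    and f_norm: "\<And>x'. (\<integral>x. f x x' \<partial>lborel) = 1"
    and g_meas: "(\<lambda>(z, x). g z x) \<in> borel_measurable (lborel \<Otimes>\<^sub>M lborel)"
    and g_nonneg: "\<And>z x. 0 \<le> g z x"
    and g_int: "\<And>x. integrable lborel (\<lambda>z. g z x)"
    and g_norm: "\<And>x. (\<integral>z. g z x \<partial>lborel) = 1"
    and z_distinct: "inj_on z {..<m}"
    and pD: "0 \<le> pD" "pD \<le> 1"
    and lam: "0 \<le> lam" and V: "0 < V"
    and upd_int: "\<And>i j. i < N \<Longrightarrow> j < m \<Longrightarrow>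
        integrable lborel (\<lambda>x. g (z j) x * pred_single f p0 i x)"
    and upd_pos: "\<And>i j. i < N \<Longrightarrow> j < m \<Longrightarrow>
        (\<integral>x. g (z j) x * pred_single f p0 i x \<partial>lborel) \<noteq> 0"
  shows "bayes_update (MT_lik g z pD lam V m) (MT_pdf (rho0 N) (pred_single f p0)) X n
       = (\<Sum>\<sigma>\<in>assoc n m. omega g z (pred_single f p0) (rho0 N) pD lam V m n \<sigma>
            * (\<Sum>\<nu>\<in>{\<nu>. \<nu> permutes {..<n}}.
                 \<Prod>i<n. post_single g z (pred_single f p0) i (X (\<nu> i)) (\<sigma> i)))"
proof -
  have support: "i < N" if "rho0 N q \<noteq> 0" "i < q" for q i
    using that by (simp add: rho0_def split: if_splits)
  have "integrable lborel (pred_single f p0 i)" "(\<integral>x. pred_single f p0 i x \<partial>lborel) = 1"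
    if "i < N" for i
    using pred_single_pdf[OF f_meas f_nonneg f_int f_norm] p0_meas p0_nonneg p0_int p0_norm that
    by blast+
  with support upd_int upd_pos show ?thesis
    by (intro bayes_update_MT_pdf) blast+
qed

end
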